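(* Let $k\in\mathbb{Z}$, let $\phi:(0,\infty)\to\mathbb{R}$ be smooth and satisfy (H1) and (H2), and let $\varphi\in L^2$. Then for $2\leq q\leq\infty$, $$\Big\|\int_0^\infty\psi_k(s)\varphi(s)e^{-it\phi(s)}\,ds\Big\|_{L^q_t(\mathbb{R})}\lesssim 2^{(\frac12-\frac{m(k)}{q})k}\|\psi_k\varphi\|_{L^2},$$ with implicit constant independent of $k$ and $\varphi$.
   Context: $\Phi:\mathbb{R}\to[0,1]$ is smooth even, supported in $\{|x|\le2\}$, $\Phi=1$ on $\{|x|\le1\}$; $\psi(x)=\Phi(x)-\Phi(2x)$, $\psi_k(s)=\psi(2^{-k}s)$. (H1): there is $m_1>0$ with $|\phi'(r)|\sim r^{m_1-1}$, $|\phi^{(\alpha)}(r)|\lesssim r^{m_1-\alpha}$ for all integers $\alpha\ge2$, $r\ge1$. (H2): there is $m_2>0$ with the same bounds with $m_2$ for $0<r<1$. $m(k)=m_1$ if $k\ge0$, $m(k)=m_2$ if $k<0$. *)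

theory Defs
  imports "HOL-Analysis.Analysis"
begin

definition smooth_on :: "real set \<Rightarrow> (real \<Rightarrow> real) \<Rightarrow> bool" where
  "smooth_on S f \<longleftrightarrow> (\<forall>n. \<forall>x\<in>S. ((deriv ^^ n) f) differentiable (at x))"

definition bump :: "(real \<Rightarrow> real) \<Rightarrow> bool" where
  "bump Phi \<longleftrightarrow> smooth_on UNIV Phi \<and> (\<forall>x. Phi (-x) = Phi x)
     \<and> (\<forall>x. 0 \<le> Phi x \<and> Phi x \<le> 1)
     \<and> (\<forall>x. \<bar>x\<bar> > 2 \<longrightarrow> Phi x = 0) \<and> (\<forall>x. \<bar>x\<bar> \<le> 1 \<longrightarrow> Phi x = 1)"

definition psi :: "(real \<Rightarrow> real) \<Rightarrow> real \<Rightarrow> real" where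
  "psi Phi x = Phi x - Phi (2 * x)"

definition psik :: "(real \<Rightarrow> real) \<Rightarrow> int \<Rightarrow> real \<Rightarrow> real" where
  "psik Phi k s = psi Phi (2 powr (- real_of_int k) * s)"

definition H1 :: "(real \<Rightarrow> real) \<Rightarrow> real \<Rightarrow> bool" where
  "H1 phi m1 \<longleftrightarrow> m1 > 0
     \<and> (\<exists>c C. c > 0 \<and> (\<forall>r. r \<ge> 1 \<longrightarrow>
           c * r powr (m1 - 1) \<le> \<bar>deriv phi r\<bar> \<and> \<bar>deriv phi r\<bar> \<le> C * r powr (m1 - 1)))
     \<and> (\<forall>a::nat. a \<ge> 2 \<longrightarrow> (\<exists>C. \<forall>r. r \<ge> 1 \<longrightarrow>
           \<bar>(deriv ^^ a) phi r\<bar> \<le> C * r powr (m1 - real a)))"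

definition H2 :: "(real \<Rightarrow> real) \<Rightarrow> real \<Rightarrow> bool" where
  "H2 phi m2 \<longleftrightarrow> m2 > 0
     \<and> (\<exists>c C. c > 0 \<and> (\<forall>r. 0 < r \<and> r < 1 \<longrightarrow>
           c * r powr (m2 - 1) \<le> \<bar>deriv phi r\<bar> \<and> \<bar>deriv phi r\<bar> \<le> C * r powr (m2 - 1)))
     \<and> (\<forall>a::nat. a \<ge> 2 \<longrightarrow> (\<exists>C. \<forall>r. 0 < r \<and> r < 1 \<longrightarrow>
           \<bar>(deriv ^^ a) phi r\<bar> \<le> C * r powr (m2 - real a)))"

definition mk :: "real \<Rightarrow> real \<Rightarrow> int \<Rightarrow> real" where
  "mk m1 m2 k = (if k \<ge> 0 then m1 else m2)"

definition L2pos :: "(real \<Rightarrow> complex) \<Rightarrow> bool" where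
  "L2pos f \<longleftrightarrow> set_borel_measurable lborel {0<..} f
     \<and> set_integrable lborel {0<..} (\<lambda>s. (cmod (f s))\<^sup>2)"

definition osc :: "(real \<Rightarrow> real) \<Rightarrow> (real \<Rightarrow> real) \<Rightarrow> int \<Rightarrow> (real \<Rightarrow> complex) \<Rightarrow> real \<Rightarrow> complex" where
  "osc Phi phi k f t = (LINT s:{0<..}|lborel.
      complex_of_real (psik Phi k s) * f s * exp (- \<i> * complex_of_real (t * phi s)))"

definition L2norm_k :: "(real \<Rightarrow> real) \<Rightarrow> int \<Rightarrow> (real \<Rightarrow> complex) \<Rightarrow> real" where
  "L2norm_k Phi k f = sqrt (LINT s:{0<..}|lborel. (cmod (complex_of_real (psik Phi k s) * f s))\<^sup>2)"

end

theory Submission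
  imports Defs "HOL-Probability.Probability"
begin

text \<open>
  For fixed \<open>k\<close> the cut-off \<open>\<psi>\<^sub>k\<close> restricts the integral to the shell \<open>[2^(k-1), 2^(k+1)]\<close>, where
  (H1) and (H2) give \<open>|\<phi>'| \<ge> c 2^(k(m(k)-1))\<close>; by the mean value theorem \<open>\<phi>\<close> expands distances
  there by that factor \<open>c\<close>. For any phase \<open>\<alpha>\<close> expanding distances by \<open>c\<close> on the support of \<open>F\<close>,
  the oscillatory integral \<open>T F(t) = \<integral> F(s) e^(-it\<alpha>(s)) ds\<close> satisfies the Plancherel-type bound
  \<open>\<parallel>T F\<parallel>\<^sub>2\<^sup>2 \<le> (2\<pi>/c) \<parallel>F\<parallel>\<^sub>2\<^sup>2\<close>: damping \<open>|T F(t)|\<^sup>2\<close> by the Gaussian \<open>exp(-(t/n)\<^sup>2/2)\<close> and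
  integrating in \<open>t\<close> first produces the kernel \<open>gauss_hat n (\<alpha> s - \<alpha> s')\<close>, which is dominated by
  \<open>gauss_hat n (c (s - s'))\<close>; the Schur test with \<open>\<integral> gauss_hat n (c x) dx = 2\<pi>/c\<close> bounds the
  damped integral uniformly in \<open>n\<close>, and monotone convergence removes the damping. Cauchy--Schwarz
  on the shell gives \<open>|T F| \<le> (3/2 \<cdot> 2^k)^(1/2) \<parallel>F\<parallel>\<^sub>2\<close>, and \<open>|T F|^q \<le> \<parallel>T F\<parallel>\<^sub>\<infinity>^(q-2) |T F|\<^sup>2\<close>
  interpolates between the two bounds.
\<close>

lemma integrable_prod_lborel:
  fixes f g :: "real \<Rightarrow> 'b::{real_normed_field, banach, second_countable_topology}"
  assumes f: "integrable lborel f" and g: "integrable lborel g"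
  shows "integrable (lborel \<Otimes>\<^sub>M lborel) (\<lambda>p. f (fst p) * g (snd p))"
proof -
  have [measurable]: "f \<in> borel_measurable borel" "g \<in> borel_measurable borel"
    using f g by (auto dest: borel_measurable_integrable)
  have "(\<integral>\<^sup>+p. ennreal (norm (f (fst p) * g (snd p))) \<partial>(lborel \<Otimes>\<^sub>M lborel))
      = (\<integral>\<^sup>+x. \<integral>\<^sup>+y. ennreal (norm (f x)) * ennreal (norm (g y)) \<partial>lborel \<partial>lborel)"
    by (subst sigma_finite_measure.nn_integral_fst[OF sigma_finite_lborel, symmetric])
      (auto simp: norm_mult ennreal_mult)
  also have "\<dots> = (\<integral>\<^sup>+x. ennreal (norm (f x)) \<partial>lborel) * (\<integral>\<^sup>+y. ennreal (norm (g y)) \<partial>lborel)"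
    by (simp add: nn_integral_cmult nn_integral_multc)
  also have "\<dots> < \<infinity>"
    using f g unfolding integrable_iff_bounded by (simp add: ennreal_mult_less_top)
  finally show ?thesis unfolding integrable_iff_bounded by simp
qed

lemma integral_swap_oscillatory:
  fixes w F :: "real \<Rightarrow> complex" and \<alpha> :: "real \<Rightarrow> real"
  assumes w: "integrable lborel w" and F: "integrable lborel F"
    and [measurable]: "\<alpha> \<in> borel_measurable borel"
  shows "(\<integral>t. w t * (\<integral>s. F s * exp (- \<i> * complex_of_real (t * \<alpha> s)) \<partial>lborel) \<partial>lborel)
       = (\<integral>s. F s * (\<integral>t. w t * exp (- \<i> * complex_of_real (t * \<alpha> s)) \<partial>lborel) \<partial>lborel)"
proof -
  have [measurable]: "w \<in> borel_measurable borel" "F \<in> borel_measurable borel"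
    using w F by (auto dest: borel_measurable_integrable)
  let ?H = "\<lambda>t s. w t * F s * exp (- \<i> * complex_of_real (t * \<alpha> s))"
  have int: "integrable (lborel \<Otimes>\<^sub>M lborel) (case_prod ?H)"
  proof (rule Bochner_Integration.integrable_bound[OF integrable_prod_lborel[OF w F]])
    show "AE p in lborel \<Otimes>\<^sub>M lborel. norm (case_prod ?H p) \<le> norm (w (fst p) * F (snd p))"
      by (auto simp: norm_mult)
  qed measurable
  have "(\<integral>t. w t * (\<integral>s. F s * exp (- \<i> * complex_of_real (t * \<alpha> s)) \<partial>lborel) \<partial>lborel)
      = (\<integral>t. (\<integral>s. ?H t s \<partial>lborel) \<partial>lborel)"
    by (simp add: mult.assoc)
  also have "\<dots> = (\<integral>s. (\<integral>t. ?H t s \<partial>lborel) \<partial>lborel)"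
    using lborel_pair.Fubini_integral[OF int] by simp
  also have "\<dots> = (\<integral>s. F s * (\<integral>t. w t * exp (- \<i> * complex_of_real (t * \<alpha> s)) \<partial>lborel) \<partial>lborel)"
    by (simp add: ac_simps)
  finally show ?thesis .
qed

subsection \<open>The Gaussian and its Fourier transform\<close>

lemma integrable_gaussian:
  fixes n :: real assumes "n > 0"
  shows "integrable lborel (\<lambda>t. exp (-(t/n)\<^sup>2/2))"
proof -
  have "(\<lambda>t. exp (-(t/n)\<^sup>2/2)) = (\<lambda>t. sqrt (2*pi*n\<^sup>2) * normal_density 0 n t)"
    using assms by (auto simp: normal_density_def power_divide field_simps)
  then show ?thesis using assms by simp
qed

lemma integral_std_gaussian: "(\<integral>u. exp (-(u::real)\<^sup>2/2) \<partial>lborel) = sqrt (2*pi)"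
proof -
  have "(\<integral>u. exp (-(u::real)\<^sup>2/2) \<partial>lborel) = (\<integral>u. sqrt (2*pi) * normal_density 0 1 u \<partial>lborel)"
    by (rule Bochner_Integration.integral_cong) (auto simp: std_normal_density_def)
  then show ?thesis by simp
qed

lemma fourier_std_gaussian:
  "(\<integral>u. complex_of_real (exp (-u\<^sup>2/2)) * exp (\<i> * complex_of_real (\<theta> * u)) \<partial>lborel)
     = complex_of_real (sqrt (2*pi) * exp (-\<theta>\<^sup>2/2))"
proof -
  have "complex_of_real (exp (-\<theta>\<^sup>2/2)) = char std_normal_distribution \<theta>"
    by (simp add: char_std_normal_distribution)
  also have "\<dots> = (\<integral>u. std_normal_density u *\<^sub>R exp (\<i> * complex_of_real (\<theta> * u)) \<partial>lborel)"
    unfolding char_def by (subst integral_density) auto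
  also have "\<dots> = complex_of_real (1 / sqrt (2*pi))
      * (\<integral>u. complex_of_real (exp (-u\<^sup>2/2)) * exp (\<i> * complex_of_real (\<theta> * u)) \<partial>lborel)"
    by (simp add: std_normal_density_def scaleR_conv_of_real flip: integral_mult_right_zero)
  finally show ?thesis by (simp add: field_simps)
qed

text \<open>\<open>gauss_hat n\<close> is the Fourier transform of \<open>t \<mapsto> exp (-(t/n)\<^sup>2/2)\<close>; it is an approximate
  identity of total mass \<open>2\<pi>\<close> as \<open>n \<rightarrow> \<infinity>\<close>.\<close>
definition gauss_hat :: "real \<Rightarrow> real \<Rightarrow> real" where
  "gauss_hat n x = n * sqrt (2*pi) * exp (-(n*x)\<^sup>2/2)"

lemma fourier_gaussian:
  fixes n :: real assumes n: "n > 0"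
  shows "(\<integral>t. complex_of_real (exp (-(t/n)\<^sup>2/2)) * exp (- \<i> * complex_of_real (t * x)) \<partial>lborel)
     = complex_of_real (gauss_hat n x)"
proof -
  have "(\<integral>t. complex_of_real (exp (-(t/n)\<^sup>2/2)) * exp (- \<i> * complex_of_real (t * x)) \<partial>lborel)
      = \<bar>n\<bar> *\<^sub>R (\<integral>u. complex_of_real (exp (-((0 + n*u)/n)\<^sup>2/2))
          * exp (- \<i> * complex_of_real ((0 + n*u) * x)) \<partial>lborel)"
    using n by (intro lborel_integral_real_affine) auto
  also have "(\<lambda>u. complex_of_real (exp (-((0 + n*u)/n)\<^sup>2/2)) * exp (- \<i> * complex_of_real ((0 + n*u) * x)))
      = (\<lambda>u. complex_of_real (exp (-u\<^sup>2/2)) * exp (\<i> * complex_of_real ((-(n*x)) * u)))"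
    using n by (auto simp: field_simps)
  also have "(\<integral>u. complex_of_real (exp (-u\<^sup>2/2)) * exp (\<i> * complex_of_real ((-(n*x)) * u)) \<partial>lborel)
     = complex_of_real (sqrt (2*pi) * exp (-(-(n*x))\<^sup>2/2))"
    by (rule fourier_std_gaussian)
  finally show ?thesis
    using n by (simp add: gauss_hat_def scaleR_conv_of_real power_mult_distrib)
qed

lemma gauss_hat_nonneg: "n > 0 \<Longrightarrow> 0 \<le> gauss_hat n x"
  unfolding gauss_hat_def by simp

lemma gauss_hat_le: "n > 0 \<Longrightarrow> gauss_hat n x \<le> n * sqrt (2*pi)"
  unfolding gauss_hat_def by (simp add: mult_left_le)

lemma gauss_hat_minus: "gauss_hat n (- x) = gauss_hat n x"
  unfolding gauss_hat_def by simp

lemma gauss_hat_antimono: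
  assumes "n > 0" "\<bar>y\<bar> \<le> \<bar>x\<bar>"
  shows "gauss_hat n x \<le> gauss_hat n y"
proof -
  have "(n*y)\<^sup>2 \<le> (n*x)\<^sup>2" using assms
    by (simp add: power_mult_distrib abs_le_square_iff mult_left_mono)
  then show ?thesis using assms unfolding gauss_hat_def by (intro mult_left_mono) auto
qed

lemma gauss_hat_measurable [measurable]: "gauss_hat n \<in> borel_measurable borel"
  unfolding gauss_hat_def by measurable

lemma
  fixes n c s :: real assumes n: "n > 0" and c: "c > 0"
  shows integrable_gauss_hat_dilated: "integrable lborel (\<lambda>x. gauss_hat n (c * (s - x)))"
    and integral_gauss_hat_dilated: "(\<integral>x. gauss_hat n (c * (s - x)) \<partial>lborel) = 2 * pi / c"
proof -
  have f: "integrable lborel (\<lambda>u::real. exp (-u\<^sup>2/2))" using integrable_gaussian[of 1] by simp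
  have nc: "-(n*c) \<noteq> 0" using n c by simp
  have eq: "(\<lambda>x. exp (-(n * c * s + (-(n*c)) * x)\<^sup>2/2)) = (\<lambda>x. exp (-(n*(c * (s - x)))\<^sup>2/2))"
    by (auto simp: algebra_simps)
  show "integrable lborel (\<lambda>x. gauss_hat n (c * (s - x)))"
    using lborel_integrable_real_affine[OF f nc, of "n * c * s"] unfolding eq gauss_hat_def by simp
  have "sqrt (2*pi) = \<bar>-(n*c)\<bar> *\<^sub>R (\<integral>x. exp (-(n * c * s + (-(n*c)) * x)\<^sup>2/2) \<partial>lborel)"
    using lborel_integral_real_affine[OF nc, of "\<lambda>u. exp (-u\<^sup>2/2)" "n * c * s"] integral_std_gaussian
    by simp
  then have "(\<integral>x. exp (-(n*(c * (s - x)))\<^sup>2/2) \<partial>lborel) = sqrt (2*pi) / (n*c)"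
    using n c unfolding eq by (simp add: field_simps)
  then have "(\<integral>x. gauss_hat n (c * (s - x)) \<partial>lborel) = n * sqrt (2*pi) * (sqrt (2*pi) / (n*c))"
    unfolding gauss_hat_def by simp
  also have "\<dots> = 2 * pi / c" using n c by (simp add: field_simps)
  finally show "(\<integral>x. gauss_hat n (c * (s - x)) \<partial>lborel) = 2 * pi / c" .
qed

lemma
  fixes g h :: "real \<Rightarrow> real"
  assumes g: "integrable lborel g" and [measurable]: "h \<in> borel_measurable borel" and n: "n > 0"
  shows integrable_mult_gauss_hat: "integrable lborel (\<lambda>x. g x * gauss_hat n (h x))"
    and integral_mult_gauss_hat_le:
      "(\<And>x. 0 \<le> g x) \<Longrightarrow> (\<integral>x. g x * gauss_hat n (h x) \<partial>lborel) \<le> n * sqrt (2*pi) * integral\<^sup>L lborel g"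
proof -
  have [measurable]: "g \<in> borel_measurable borel" using g by (auto dest: borel_measurable_integrable)
  have le: "\<bar>g x * gauss_hat n (h x)\<bar> \<le> n * sqrt (2*pi) * \<bar>g x\<bar>" for x
    using n by (auto simp: abs_mult gauss_hat_nonneg gauss_hat_le mult.commute[of "\<bar>g x\<bar>"]
        intro!: mult_right_mono)
  show int: "integrable lborel (\<lambda>x. g x * gauss_hat n (h x))"
    by (rule Bochner_Integration.integrable_bound[where f = "\<lambda>x. n * sqrt (2*pi) * g x"])
      (use g le n in \<open>auto simp: abs_mult\<close>)
  assume "\<And>x. 0 \<le> g x"
  then have "(\<integral>x. g x * gauss_hat n (h x) \<partial>lborel) \<le> (\<integral>x. n * sqrt (2*pi) * g x \<partial>lborel)"
    using int g le by (intro integral_mono) (auto dest: abs_le_D1)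
  then show "(\<integral>x. g x * gauss_hat n (h x) \<partial>lborel) \<le> n * sqrt (2*pi) * integral\<^sup>L lborel g"
    by simp
qed

subsection \<open>Oscillatory integrals with an expanding phase\<close>

definition osc_transform :: "(real \<Rightarrow> complex) \<Rightarrow> (real \<Rightarrow> real) \<Rightarrow> real \<Rightarrow> complex" where
  "osc_transform F \<alpha> t = (\<integral>s. F s * exp (- \<i> * complex_of_real (t * \<alpha> s)) \<partial>lborel)"

lemma osc_transform_measurable [measurable]:
  assumes [measurable]: "F \<in> borel_measurable borel" "\<alpha> \<in> borel_measurable borel"
  shows "osc_transform F \<alpha> \<in> borel_measurable borel"
  unfolding osc_transform_def[abs_def] by measurable

lemma norm_osc_transform_le: "cmod (osc_transform F \<alpha> t) \<le> (\<integral>s. cmod (F s) \<partial>lborel)"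
proof -
  have "cmod (osc_transform F \<alpha> t) \<le> (\<integral>s. norm (F s * exp (- \<i> * complex_of_real (t * \<alpha> s))) \<partial>lborel)"
    unfolding osc_transform_def by (rule integral_norm_bound)
  then show ?thesis by (simp add: norm_mult)
qed

context
  fixes F :: "real \<Rightarrow> complex" and a b :: real
  assumes F_measurable [measurable]: "F \<in> borel_measurable borel"
    and F_support: "\<And>s. s \<notin> {a..b} \<Longrightarrow> F s = 0"
    and F_square_integrable: "integrable lborel (\<lambda>s. (cmod (F s))\<^sup>2)"
begin

lemma integrable_F: "integrable lborel F"
proof (rule Bochner_Integration.integrable_bound)
  show "integrable lborel (\<lambda>s. indicator {a..b} s + (cmod (F s))\<^sup>2 :: real)"
    using F_square_integrable
    by (intro Bochner_Integration.integrable_add integrable_real_indicator)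
      (auto simp: emeasure_lborel_Icc_eq)
  have "cmod (F s) \<le> indicator {a..b} s + (cmod (F s))\<^sup>2" for s
  proof (cases "s \<in> {a..b}")
    case True
    have "0 \<le> (cmod (F s) - 1/2)\<^sup>2" by simp
    then show ?thesis using True by (simp add: power2_eq_square algebra_simps)
  qed (simp add: F_support)
  then show "AE s in lborel. norm (F s) \<le> norm (indicator {a..b} s + (cmod (F s))\<^sup>2 :: real)"
    by (intro AE_I2) simp
qed simp

lemma integral_norm_F_le:
  assumes ab: "a < b"
  shows "(\<integral>s. cmod (F s) \<partial>lborel) \<le> sqrt (b - a) * sqrt (\<integral>s. (cmod (F s))\<^sup>2 \<partial>lborel)"
proof -
  define S where "S = (\<integral>s. (cmod (F s))\<^sup>2 \<partial>lborel)"
  have indint: "integrable lborel (indicator {a..b} :: real \<Rightarrow> real)"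
    by (intro integrable_real_indicator) (auto simp: emeasure_lborel_Icc_eq)
  have weighted: "(\<integral>s. cmod (F s) \<partial>lborel) \<le> (l * S + (b - a) / l) / 2" if l: "l > 0" for l
  proof -
    have "cmod (F s) \<le> (l * (cmod (F s))\<^sup>2 + indicator {a..b} s / l) / 2" for s
    proof (cases "s \<in> {a..b}")
      case True
      have "0 \<le> (l * cmod (F s) - 1)\<^sup>2" by simp
      then have "2 * l * cmod (F s) \<le> l\<^sup>2 * (cmod (F s))\<^sup>2 + 1"
        by (simp add: power2_eq_square algebra_simps)
      then show ?thesis using True l by (simp add: power2_eq_square field_simps)
    qed (simp add: F_support)
    then have "(\<integral>s. cmod (F s) \<partial>lborel) \<le> (\<integral>s. (l * (cmod (F s))\<^sup>2 + indicator {a..b} s / l) / 2 \<partial>lborel)"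
      using F_square_integrable indint l by (intro integral_mono') auto
    also have "\<dots> = (l * S + (b - a) / l) / 2"
      using F_square_integrable indint ab by (simp add: S_def)
    finally show ?thesis .
  qed
  show ?thesis
  proof (cases "S = 0")
    case True
    have "AE s in lborel. (cmod (F s))\<^sup>2 = 0"
      using True F_square_integrable unfolding S_def
      by (subst integral_nonneg_eq_0_iff_AE[symmetric]) auto
    then have "AE s in lborel. cmod (F s) = 0" by eventually_elim simp
    then have "(\<integral>s. cmod (F s) \<partial>lborel) = 0" by (rule integral_eq_zero_AE)
    then show ?thesis using True ab unfolding S_def by simp
  next
    case False
    then have Sp: "S > 0" unfolding S_def by (simp add: order_less_le)
    \<comment> \<open>the optimal weight in the AM-GM bound above\<close>
    define l where "l = sqrt (b - a) / sqrt S"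
    have l: "l > 0" unfolding l_def using Sp ab by simp
    have "l * S = sqrt (b - a) * (S / sqrt S)" "(b - a) / l = ((b - a) / sqrt (b - a)) * sqrt S"
      unfolding l_def by simp_all
    then have "l * S = sqrt (b - a) * sqrt S" "(b - a) / l = sqrt (b - a) * sqrt S"
      using Sp ab by (simp_all add: real_div_sqrt)
    then show ?thesis using weighted[OF l] unfolding S_def by simp
  qed
qed

lemma integrable_norm_F_mult_gauss_hat_integral:
  assumes n: "n > 0" and [measurable]: "(\<lambda>(s, s'). h s s') \<in> borel_measurable (borel \<Otimes>\<^sub>M lborel)"
    and h: "\<And>s. h s \<in> borel_measurable borel"
  shows "integrable lborel (\<lambda>s. cmod (F s) * (\<integral>s'. cmod (F s') * gauss_hat n (h s s') \<partial>lborel))"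
proof (rule Bochner_Integration.integrable_bound)
  let ?M = "n * sqrt (2*pi) * (\<integral>s. cmod (F s) \<partial>lborel)"
  show "integrable lborel (\<lambda>s. ?M * cmod (F s))" using integrable_F by simp
  have "0 \<le> (\<integral>s'. cmod (F s') * gauss_hat n (h s s') \<partial>lborel)"
    "(\<integral>s'. cmod (F s') * gauss_hat n (h s s') \<partial>lborel) \<le> ?M" for s
    using integral_mult_gauss_hat_le[OF _ h n] integrable_F n
    by (auto intro!: integral_nonneg_AE simp: gauss_hat_nonneg)
  then show "AE s in lborel. norm (cmod (F s) * (\<integral>s'. cmod (F s') * gauss_hat n (h s s') \<partial>lborel))
      \<le> norm (?M * cmod (F s))"
    using n by (intro AE_I2) (auto simp: abs_mult mult.commute[of "cmod _"] intro!: mult_right_mono)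
qed measurable

lemma integral_indicator_mult_energy_le:
  assumes n: "n > 0" and c: "c > 0"
  shows "(\<integral>s. indicator {a..b} s * (\<integral>s'. (cmod (F s'))\<^sup>2 * gauss_hat n (c * (s - s')) \<partial>lborel) \<partial>lborel)
     \<le> 2 * pi / c * (\<integral>s. (cmod (F s))\<^sup>2 \<partial>lborel)"
proof -
  let ?ind = "indicator {a..b} :: real \<Rightarrow> real"
  let ?G = "\<lambda>(x, y). ?ind y * ((cmod (F x))\<^sup>2 * gauss_hat n (c * (y - x)))"
  have int: "integrable (lborel \<Otimes>\<^sub>M lborel) ?G"
  proof (rule Bochner_Integration.integrable_bound)
    show "integrable (lborel \<Otimes>\<^sub>M lborel) (\<lambda>p. (n * sqrt (2*pi) * (cmod (F (fst p)))\<^sup>2) * ?ind (snd p))"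
      using F_square_integrable
      by (intro integrable_prod_lborel integrable_real_indicator) (auto simp: emeasure_lborel_Icc_eq)
    show "AE p in lborel \<Otimes>\<^sub>M lborel. norm (?G p) \<le> norm ((n * sqrt (2*pi) * (cmod (F (fst p)))\<^sup>2) * ?ind (snd p))"
      using n by (intro AE_I2)
        (auto simp: abs_mult gauss_hat_nonneg gauss_hat_le indicator_def mult.commute[of "_\<^sup>2"]
          intro!: mult_right_mono)
  qed measurable
  have "(\<integral>s. ?ind s * (\<integral>s'. (cmod (F s'))\<^sup>2 * gauss_hat n (c * (s - s')) \<partial>lborel) \<partial>lborel)
      = (\<integral>y. (\<integral>x. ?G (x, y) \<partial>lborel) \<partial>lborel)"
    by simp
  also have "\<dots> = (\<integral>x. (\<integral>y. ?G (x, y) \<partial>lborel) \<partial>lborel)"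
    using lborel_pair.Fubini_integral[OF int] by simp
  also have "\<dots> \<le> (\<integral>x. 2 * pi / c * (cmod (F x))\<^sup>2 \<partial>lborel)"
  proof (rule integral_mono')
    show "integrable lborel (\<lambda>x. 2 * pi / c * (cmod (F x))\<^sup>2)" using F_square_integrable by simp
    fix x
    have "?G (x, y) = (cmod (F x))\<^sup>2 * (?ind y * gauss_hat n (c * (x - y)))" for y
      using gauss_hat_minus[of n "c * (x - y)"] by (simp add: algebra_simps)
    then have "(\<integral>y. ?G (x, y) \<partial>lborel) = (\<integral>y. (cmod (F x))\<^sup>2 * (?ind y * gauss_hat n (c * (x - y))) \<partial>lborel)"
      by (intro Bochner_Integration.integral_cong) auto
    also have "\<dots> = (cmod (F x))\<^sup>2 * (\<integral>y. ?ind y * gauss_hat n (c * (x - y)) \<partial>lborel)"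
      by (rule integral_mult_right_zero)
    also have "\<dots> \<le> (cmod (F x))\<^sup>2 * (\<integral>y. gauss_hat n (c * (x - y)) \<partial>lborel)"
      using integrable_gauss_hat_dilated[OF n c] n
      by (intro mult_left_mono integral_mono') (auto simp: gauss_hat_nonneg indicator_def)
    finally show "(\<integral>y. ?G (x, y) \<partial>lborel) \<le> 2 * pi / c * (cmod (F x))\<^sup>2"
      using integral_gauss_hat_dilated[OF n c, of x] by (simp add: field_simps)
  qed (use c in simp)
  finally show ?thesis by simp
qed

lemma schur_gauss_hat:
  assumes n: "n > 0" and c: "c > 0"
  shows "(\<integral>s. cmod (F s) * (\<integral>s'. cmod (F s') * gauss_hat n (c * (s - s')) \<partial>lborel) \<partial>lborel)
     \<le> 2 * pi / c * (\<integral>s. (cmod (F s))\<^sup>2 \<partial>lborel)"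
proof -
  define S where "S = (\<integral>s. (cmod (F s))\<^sup>2 \<partial>lborel)"
  define ind where "ind = (indicator {a..b} :: real \<Rightarrow> real)"
  define H where "H s = (\<integral>s'. (cmod (F s'))\<^sup>2 * gauss_hat n (c * (s - s')) \<partial>lborel)" for s
  have "0 \<le> S" unfolding S_def by simp
  have [measurable]: "ind \<in> borel_measurable borel" unfolding ind_def by simp
  have [measurable]: "H \<in> borel_measurable borel" unfolding H_def[abs_def] by measurable
  have ind01: "0 \<le> ind x" "ind x \<le> 1" for x unfolding ind_def by (auto simp: indicator_def)
  have indint: "integrable lborel ind" unfolding ind_def
    by (intro integrable_real_indicator) (auto simp: emeasure_lborel_Icc_eq)
  have ind_kernel: "integrable lborel (\<lambda>s'. ind s' * gauss_hat n (c * (s - s')))" for s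
    by (rule integrable_mult_gauss_hat[OF indint _ n]) simp
  have F2_kernel: "integrable lborel (\<lambda>s'. (cmod (F s'))\<^sup>2 * gauss_hat n (c * (s - s')))" for s
    by (rule integrable_mult_gauss_hat[OF F_square_integrable _ n]) simp
  have H_bounds: "0 \<le> H s" "H s \<le> n * sqrt (2*pi) * S" for s
    unfolding H_def S_def using n integral_mult_gauss_hat_le[OF F_square_integrable _ n]
    by (auto intro!: integral_nonneg_AE simp: gauss_hat_nonneg)
  have indH: "integrable lborel (\<lambda>s. ind s * H s)"
  proof (rule Bochner_Integration.integrable_bound)
    show "integrable lborel (\<lambda>s. (n * sqrt (2*pi) * S) * ind s)" using indint by simp
    show "AE s in lborel. norm (ind s * H s) \<le> norm ((n * sqrt (2*pi) * S) * ind s)"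
      using H_bounds ind01 n \<open>0 \<le> S\<close> by (intro AE_I2) (auto simp: abs_mult mult.commute[of "ind _"] intro!: mult_right_mono)
  qed measurable
  have pointwise: "cmod (F s) * (\<integral>s'. cmod (F s') * gauss_hat n (c * (s - s')) \<partial>lborel)
        \<le> pi / c * (cmod (F s))\<^sup>2 + ind s * H s / 2" for s
  proof -
    have amgm: "cmod (F s) * cmod (F s') \<le> ((cmod (F s))\<^sup>2 * ind s' + ind s * (cmod (F s'))\<^sup>2) / 2" for s'
    proof (cases "s \<in> {a..b} \<and> s' \<in> {a..b}")
      case True
      have "0 \<le> (cmod (F s) - cmod (F s'))\<^sup>2" by simp
      then show ?thesis using True by (simp add: ind_def power2_eq_square algebra_simps)
    qed (auto simp: F_support ind01)
    have "cmod (F s) * (\<integral>s'. cmod (F s') * gauss_hat n (c * (s - s')) \<partial>lborel)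
        = (\<integral>s'. (cmod (F s) * cmod (F s')) * gauss_hat n (c * (s - s')) \<partial>lborel)"
      by (simp add: mult.assoc flip: integral_mult_right_zero)
    also have "\<dots> \<le> (\<integral>s'. ((cmod (F s))\<^sup>2 / 2) * (ind s' * gauss_hat n (c * (s - s')))
        + (ind s / 2) * ((cmod (F s'))\<^sup>2 * gauss_hat n (c * (s - s'))) \<partial>lborel)"
    proof (rule integral_mono')
      fix s'
      have "(cmod (F s) * cmod (F s')) * gauss_hat n (c * (s - s'))
          \<le> (((cmod (F s))\<^sup>2 * ind s' + ind s * (cmod (F s'))\<^sup>2) / 2) * gauss_hat n (c * (s - s'))"
        using amgm n by (intro mult_right_mono) (auto simp: gauss_hat_nonneg)
      then show "(cmod (F s) * cmod (F s')) * gauss_hat n (c * (s - s'))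
          \<le> ((cmod (F s))\<^sup>2 / 2) * (ind s' * gauss_hat n (c * (s - s')))
            + (ind s / 2) * ((cmod (F s'))\<^sup>2 * gauss_hat n (c * (s - s')))"
        by (simp add: field_simps)
      show "0 \<le> ((cmod (F s))\<^sup>2 / 2) * (ind s' * gauss_hat n (c * (s - s')))
          + (ind s / 2) * ((cmod (F s'))\<^sup>2 * gauss_hat n (c * (s - s')))"
        using n ind01 by (simp add: gauss_hat_nonneg)
    qed (use ind_kernel F2_kernel in simp)
    also have "\<dots> = ((cmod (F s))\<^sup>2 / 2) * (\<integral>s'. ind s' * gauss_hat n (c * (s - s')) \<partial>lborel)
        + (ind s / 2) * H s"
      using ind_kernel F2_kernel unfolding H_def by simp
    also have "\<dots> \<le> ((cmod (F s))\<^sup>2 / 2) * (2 * pi / c) + (ind s / 2) * H s"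
    proof -
      have "(\<integral>s'. ind s' * gauss_hat n (c * (s - s')) \<partial>lborel) \<le> (\<integral>s'. gauss_hat n (c * (s - s')) \<partial>lborel)"
        using integrable_gauss_hat_dilated[OF n c] ind_kernel n ind01
        by (intro integral_mono') (auto simp: gauss_hat_nonneg intro!: mult_left_le_one_le)
      then have "(\<integral>s'. ind s' * gauss_hat n (c * (s - s')) \<partial>lborel) \<le> 2 * pi / c"
        using integral_gauss_hat_dilated[OF n c, of s] by simp
      then show ?thesis by (intro add_right_mono mult_left_mono) auto
    qed
    finally show ?thesis by (simp add: field_simps)
  qed
  have "(\<integral>s. cmod (F s) * (\<integral>s'. cmod (F s') * gauss_hat n (c * (s - s')) \<partial>lborel) \<partial>lborel)
     \<le> (\<integral>s. pi / c * (cmod (F s))\<^sup>2 + ind s * H s / 2 \<partial>lborel)"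
    using pointwise F_square_integrable indH c H_bounds ind01 by (intro integral_mono') auto
  also have "\<dots> = pi / c * S + (\<integral>s. ind s * H s \<partial>lborel) / 2"
    using F_square_integrable indH by (simp add: S_def)
  also have "(\<integral>s. ind s * H s \<partial>lborel) \<le> 2 * pi / c * S"
    unfolding ind_def H_def S_def by (rule integral_indicator_mult_energy_le[OF n c])
  finally show ?thesis by (simp add: S_def)
qed

context
  fixes \<alpha> :: "real \<Rightarrow> real" and c :: real
  assumes \<alpha>_measurable [measurable]: "\<alpha> \<in> borel_measurable borel"
    and c_pos: "c > 0"
    and expanding: "\<And>s s'. s \<in> {a..b} \<Longrightarrow> s' \<in> {a..b} \<Longrightarrow> c * \<bar>s - s'\<bar> \<le> \<bar>\<alpha> s - \<alpha> s'\<bar>"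
begin

lemma damped_energy_eq:
  fixes n :: real assumes n: "n > 0"
  shows "(\<integral>t. complex_of_real (exp (-(t/n)\<^sup>2/2)) * (osc_transform F \<alpha> t * cnj (osc_transform F \<alpha> t)) \<partial>lborel)
    = (\<integral>s. F s * (\<integral>s'. cnj (F s') * complex_of_real (gauss_hat n (\<alpha> s - \<alpha> s')) \<partial>lborel) \<partial>lborel)"
proof -
  define W where "W t = complex_of_real (exp (-(t/n)\<^sup>2/2))" for t
  let ?T = "osc_transform F \<alpha>"
  have [measurable]: "W \<in> borel_measurable borel" unfolding W_def[abs_def] by measurable
  have [measurable]: "(\<lambda>t. cnj (?T t)) \<in> borel_measurable borel"
    by (rule borel_measurable_continuous_on[where f=cnj]) (intro continuous_intros, measurable)
  have W_int: "integrable lborel W" unfolding W_def using integrable_gaussian[OF n] by simp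
  have cnj_T: "cnj (?T t) = (\<integral>s'. cnj (F s') * exp (- \<i> * complex_of_real (t * (- \<alpha> s'))) \<partial>lborel)" for t
    unfolding osc_transform_def
    by (subst Bochner_Integration.integral_cnj[symmetric], rule Bochner_Integration.integral_cong)
      (auto simp: exp_cnj)
  have WT_int: "integrable lborel (\<lambda>t. W t * cnj (?T t))"
  proof (rule Bochner_Integration.integrable_bound)
    show "integrable lborel (\<lambda>t. (\<integral>s. cmod (F s) \<partial>lborel) * exp (-(t/n)\<^sup>2/2))"
      using integrable_gaussian[OF n] by simp
    have "exp (-(t/n)\<^sup>2/2) * cmod (?T t) \<le> exp (-(t/n)\<^sup>2/2) * (\<integral>s. cmod (F s) \<partial>lborel)" for t
      by (intro mult_left_mono norm_osc_transform_le) auto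
    then show "AE t in lborel. norm (W t * cnj (?T t)) \<le> norm ((\<integral>s. cmod (F s) \<partial>lborel) * exp (-(t/n)\<^sup>2/2))"
      by (intro AE_I2) (simp add: W_def norm_mult mult.commute)
  qed measurable
  have inner: "(\<integral>t. (W t * cnj (?T t)) * exp (- \<i> * complex_of_real (t * \<alpha> s)) \<partial>lborel)
      = (\<integral>s'. cnj (F s') * complex_of_real (gauss_hat n (\<alpha> s - \<alpha> s')) \<partial>lborel)" for s
  proof -
    have int: "integrable lborel (\<lambda>t. W t * exp (- \<i> * complex_of_real (t * \<alpha> s)))"
      by (rule Bochner_Integration.integrable_bound[OF W_int]) (auto simp: norm_mult)
    have "(\<integral>t. (W t * cnj (?T t)) * exp (- \<i> * complex_of_real (t * \<alpha> s)) \<partial>lborel)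
      = (\<integral>t. (W t * exp (- \<i> * complex_of_real (t * \<alpha> s)))
           * (\<integral>s'. cnj (F s') * exp (- \<i> * complex_of_real (t * (- \<alpha> s'))) \<partial>lborel) \<partial>lborel)"
      by (simp add: cnj_T ac_simps)
    also have "\<dots> = (\<integral>s'. cnj (F s') * (\<integral>t. (W t * exp (- \<i> * complex_of_real (t * \<alpha> s)))
           * exp (- \<i> * complex_of_real (t * (- \<alpha> s'))) \<partial>lborel) \<partial>lborel)"
      using integrable_F by (intro integral_swap_oscillatory[OF int]) auto
    also have "\<dots> = (\<integral>s'. cnj (F s') * complex_of_real (gauss_hat n (\<alpha> s - \<alpha> s')) \<partial>lborel)"
    proof (rule Bochner_Integration.integral_cong[OF refl], rule arg_cong[where f="\<lambda>x. cnj (F _) * x"])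
      fix s'
      have "(\<integral>t. (W t * exp (- \<i> * complex_of_real (t * \<alpha> s))) * exp (- \<i> * complex_of_real (t * (- \<alpha> s'))) \<partial>lborel)
         = (\<integral>t. complex_of_real (exp (-(t/n)\<^sup>2/2)) * exp (- \<i> * complex_of_real (t * (\<alpha> s - \<alpha> s'))) \<partial>lborel)"
        unfolding W_def
        by (rule Bochner_Integration.integral_cong[OF refl]) (simp add: mult.assoc exp_add[symmetric] algebra_simps)
      also have "\<dots> = complex_of_real (gauss_hat n (\<alpha> s - \<alpha> s'))"
        by (rule fourier_gaussian[OF n])
      finally show "(\<integral>t. (W t * exp (- \<i> * complex_of_real (t * \<alpha> s))) * exp (- \<i> * complex_of_real (t * (- \<alpha> s'))) \<partial>lborel)
          = complex_of_real (gauss_hat n (\<alpha> s - \<alpha> s'))" .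
    qed
    finally show ?thesis .
  qed
  have "(\<integral>t. complex_of_real (exp (-(t/n)\<^sup>2/2)) * (?T t * cnj (?T t)) \<partial>lborel)
      = (\<integral>t. (W t * cnj (?T t)) * (\<integral>s. F s * exp (- \<i> * complex_of_real (t * \<alpha> s)) \<partial>lborel) \<partial>lborel)"
    unfolding W_def osc_transform_def by (simp add: ac_simps)
  also have "\<dots> = (\<integral>s. F s * (\<integral>t. (W t * cnj (?T t)) * exp (- \<i> * complex_of_real (t * \<alpha> s)) \<partial>lborel) \<partial>lborel)"
    by (rule integral_swap_oscillatory[OF WT_int integrable_F \<alpha>_measurable])
  finally show ?thesis by (simp only: inner)
qed

lemma integral_gauss_hat_phase_le:
  assumes n: "n > 0"
  shows "cmod (F s) * (\<integral>s'. cmod (F s') * gauss_hat n (\<alpha> s - \<alpha> s') \<partial>lborel)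
    \<le> cmod (F s) * (\<integral>s'. cmod (F s') * gauss_hat n (c * (s - s')) \<partial>lborel)"
proof (cases "s \<in> {a..b}")
  case s: True
  have "cmod (F s') * gauss_hat n (\<alpha> s - \<alpha> s') \<le> cmod (F s') * gauss_hat n (c * (s - s'))" for s'
  proof (cases "s' \<in> {a..b}")
    case True
    have "\<bar>c * (s - s')\<bar> \<le> \<bar>\<alpha> s - \<alpha> s'\<bar>" using expanding[OF s True] c_pos by (simp add: abs_mult)
    then show ?thesis by (intro mult_left_mono gauss_hat_antimono n) auto
  qed (simp add: F_support)
  then have "(\<integral>s'. cmod (F s') * gauss_hat n (\<alpha> s - \<alpha> s') \<partial>lborel)
      \<le> (\<integral>s'. cmod (F s') * gauss_hat n (c * (s - s')) \<partial>lborel)"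
    using integrable_mult_gauss_hat[OF integrable_norm[OF integrable_F] _ n] n
    by (intro integral_mono') (auto simp: gauss_hat_nonneg)
  then show ?thesis by (intro mult_left_mono) auto
qed (simp add: F_support)

lemma damped_energy_le:
  fixes n :: real assumes n: "n > 0"
  shows "(\<integral>t. exp (-(t/n)\<^sup>2/2) * (cmod (osc_transform F \<alpha> t))\<^sup>2 \<partial>lborel)
    \<le> 2 * pi / c * (\<integral>s. (cmod (F s))\<^sup>2 \<partial>lborel)"
proof -
  let ?T = "osc_transform F \<alpha>"
  define R where "R = (\<integral>t. exp (-(t/n)\<^sup>2/2) * (cmod (?T t))\<^sup>2 \<partial>lborel)"
  have "complex_of_real R = (\<integral>t. complex_of_real (exp (-(t/n)\<^sup>2/2) * (cmod (?T t))\<^sup>2) \<partial>lborel)"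
    unfolding R_def by (rule integral_complex_of_real[symmetric])
  also have "\<dots> = (\<integral>t. complex_of_real (exp (-(t/n)\<^sup>2/2)) * (?T t * cnj (?T t)) \<partial>lborel)"
    by (rule Bochner_Integration.integral_cong[OF refl]) (simp only: of_real_mult complex_norm_square)
  also have "\<dots> = (\<integral>s. F s * (\<integral>s'. cnj (F s') * complex_of_real (gauss_hat n (\<alpha> s - \<alpha> s')) \<partial>lborel) \<partial>lborel)"
    by (rule damped_energy_eq[OF n])
  finally have R_eq: "complex_of_real R = \<dots>" .
  have "R \<le> cmod (complex_of_real R)" by simp
  also have "\<dots> \<le> (\<integral>s. norm (F s * (\<integral>s'. cnj (F s') * complex_of_real (gauss_hat n (\<alpha> s - \<alpha> s')) \<partial>lborel)) \<partial>lborel)"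
    unfolding R_eq by (rule integral_norm_bound)
  also have "\<dots> \<le> (\<integral>s. cmod (F s) * (\<integral>s'. cmod (F s') * gauss_hat n (\<alpha> s - \<alpha> s') \<partial>lborel) \<partial>lborel)"
  proof (rule integral_mono')
    show "integrable lborel (\<lambda>s. cmod (F s) * (\<integral>s'. cmod (F s') * gauss_hat n (\<alpha> s - \<alpha> s') \<partial>lborel))"
      by (rule integrable_norm_F_mult_gauss_hat_integral[OF n]) auto
    fix s
    have "cmod (\<integral>s'. cnj (F s') * complex_of_real (gauss_hat n (\<alpha> s - \<alpha> s')) \<partial>lborel)
        \<le> (\<integral>s'. cmod (F s') * gauss_hat n (\<alpha> s - \<alpha> s') \<partial>lborel)"
      using integral_norm_bound[of lborel "\<lambda>s'. cnj (F s') * complex_of_real (gauss_hat n (\<alpha> s - \<alpha> s'))"] n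
      by (simp add: norm_mult gauss_hat_nonneg)
    then show "norm (F s * (\<integral>s'. cnj (F s') * complex_of_real (gauss_hat n (\<alpha> s - \<alpha> s')) \<partial>lborel))
       \<le> cmod (F s) * (\<integral>s'. cmod (F s') * gauss_hat n (\<alpha> s - \<alpha> s') \<partial>lborel)"
      by (simp add: norm_mult mult_left_mono)
    show "0 \<le> cmod (F s) * (\<integral>s'. cmod (F s') * gauss_hat n (\<alpha> s - \<alpha> s') \<partial>lborel)"
      using n by (auto intro!: integral_nonneg_AE simp: gauss_hat_nonneg)
  qed
  also have "\<dots> \<le> (\<integral>s. cmod (F s) * (\<integral>s'. cmod (F s') * gauss_hat n (c * (s - s')) \<partial>lborel) \<partial>lborel)"
  proof (rule integral_mono')
    show "integrable lborel (\<lambda>s. cmod (F s) * (\<integral>s'. cmod (F s') * gauss_hat n (c * (s - s')) \<partial>lborel))"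
      by (rule integrable_norm_F_mult_gauss_hat_integral[OF n]) auto
    show "0 \<le> cmod (F s) * (\<integral>s'. cmod (F s') * gauss_hat n (c * (s - s')) \<partial>lborel)" for s
      using n by (auto intro!: integral_nonneg_AE simp: gauss_hat_nonneg)
  qed (rule integral_gauss_hat_phase_le[OF n])
  also have "\<dots> \<le> 2 * pi / c * (\<integral>s. (cmod (F s))\<^sup>2 \<partial>lborel)"
    by (rule schur_gauss_hat[OF n c_pos])
  finally show ?thesis unfolding R_def .
qed

lemma
  shows integrable_osc_transform_square: "integrable lborel (\<lambda>t. (cmod (osc_transform F \<alpha> t))\<^sup>2)"
    and integral_osc_transform_square_le:
      "(\<integral>t. (cmod (osc_transform F \<alpha> t))\<^sup>2 \<partial>lborel) \<le> 2 * pi / c * (\<integral>s. (cmod (F s))\<^sup>2 \<partial>lborel)"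
proof -
  let ?T = "osc_transform F \<alpha>"
  define B where "B = 2 * pi / c * (\<integral>s. (cmod (F s))\<^sup>2 \<partial>lborel)"
  define M where "M = (\<integral>s. cmod (F s) \<partial>lborel)"
  define f where "f i t = exp (-(t/real (Suc i))\<^sup>2/2) * (cmod (?T t))\<^sup>2" for i t
  have [measurable]: "f i \<in> borel_measurable borel" for i unfolding f_def[abs_def] by measurable
  have f_int: "integrable lborel (f i)" for i
  proof (rule Bochner_Integration.integrable_bound)
    show "integrable lborel (\<lambda>t. M\<^sup>2 * exp (-(t/real (Suc i))\<^sup>2/2))"
      using integrable_gaussian[of "real (Suc i)"] by simp
    have "(cmod (?T t))\<^sup>2 \<le> M\<^sup>2" for t unfolding M_def by (intro power_mono norm_osc_transform_le) simp
    then show "AE t in lborel. norm (f i t) \<le> norm (M\<^sup>2 * exp (-(t/real (Suc i))\<^sup>2/2))"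
      unfolding f_def by (intro AE_I2) (simp add: abs_mult mult.commute[of "exp _"] mult_right_mono)
  qed simp
  have f_mono: "f i t \<le> f (Suc i) t" for i t
  proof -
    have "(t/real (Suc (Suc i)))\<^sup>2 \<le> (t/real (Suc i))\<^sup>2"
      by (simp add: power_divide frac_le)
    then show ?thesis unfolding f_def by (intro mult_right_mono) auto
  qed
  have f_lim: "(\<lambda>i. f i t) \<longlonglongrightarrow> (cmod (?T t))\<^sup>2" for t
  proof -
    have "(\<lambda>i. t / real (Suc i)) \<longlonglongrightarrow> 0"
      using LIMSEQ_Suc[OF lim_const_over_n[of t]] by simp
    then have "(\<lambda>i. exp (-(t/real (Suc i))\<^sup>2/2) * (cmod (?T t))\<^sup>2) \<longlonglongrightarrow> exp (-(0)\<^sup>2/2) * (cmod (?T t))\<^sup>2"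
      by (intro tendsto_intros) auto
    then show ?thesis unfolding f_def by simp
  qed
  have f_le: "integral\<^sup>L lborel (f i) \<le> B" for i
    unfolding f_def B_def by (rule damped_energy_le) simp
  have "incseq (\<lambda>i. integral\<^sup>L lborel (f i))"
    by (rule incseq_SucI, rule integral_mono[OF f_int f_int f_mono])
  then obtain L where L: "(\<lambda>i. integral\<^sup>L lborel (f i)) \<longlonglongrightarrow> L"
    using incseq_convergent f_le by blast
  have mono: "AE t in lborel. mono (\<lambda>n. f n t)"
    by (intro AE_I2 incseq_SucI f_mono)
  show "integrable lborel (\<lambda>t. (cmod (?T t))\<^sup>2)"
    by (rule integrable_monotone_convergence[OF f_int mono AE_I2[OF f_lim] L]) measurable
  have "(\<integral>t. (cmod (?T t))\<^sup>2 \<partial>lborel) = L"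
    by (rule integral_monotone_convergence[OF f_int mono AE_I2[OF f_lim] L]) measurable
  also have "L \<le> B" using L f_le by (intro LIMSEQ_le_const2) auto
  finally show "(\<integral>t. (cmod (?T t))\<^sup>2 \<partial>lborel) \<le> 2 * pi / c * (\<integral>s. (cmod (F s))\<^sup>2 \<partial>lborel)"
    unfolding B_def .
qed

lemma
  fixes q :: real
  assumes ab: "a < b" and q: "2 \<le> q"
  shows integrable_osc_transform_powr: "integrable lborel (\<lambda>t. (cmod (osc_transform F \<alpha> t)) powr q)"
    and osc_transform_Lq_le: "(\<integral>t. (cmod (osc_transform F \<alpha> t)) powr q \<partial>lborel) powr (1/q)
       \<le> (b - a) powr (1/2 - 1/q) * (2 * pi / c) powr (1/q) * sqrt (\<integral>s. (cmod (F s))\<^sup>2 \<partial>lborel)"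
proof -
  let ?T = "osc_transform F \<alpha>"
  define S where "S = (\<integral>s. (cmod (F s))\<^sup>2 \<partial>lborel)"
  define E where "E = 2 * pi / c"
  define M where "M = sqrt (b - a) * sqrt S"
  have S: "0 \<le> S" unfolding S_def by simp
  have T_le: "cmod (?T t) \<le> M" for t
    using norm_osc_transform_le[of F \<alpha> t] integral_norm_F_le[OF ab] unfolding M_def S_def by linarith
  have pointwise: "(cmod (?T t)) powr q \<le> M powr (q - 2) * (cmod (?T t))\<^sup>2" for t
  proof (cases "?T t = 0")
    case False
    have "(cmod (?T t)) powr q = (cmod (?T t)) powr ((q - 2) + 2)" by simp
    also have "\<dots> = (cmod (?T t)) powr (q - 2) * (cmod (?T t)) powr 2"
      by (rule powr_add)
    also have "\<dots> \<le> M powr (q - 2) * (cmod (?T t))\<^sup>2"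
      using q T_le[of t] False by (simp add: powr_mono2 mult_right_mono)
    finally show ?thesis .
  qed (use q in simp)
  show "integrable lborel (\<lambda>t. (cmod (?T t)) powr q)"
    by (rule Bochner_Integration.integrable_bound[where f = "\<lambda>t. M powr (q - 2) * (cmod (?T t))\<^sup>2"])
      (use integrable_osc_transform_square pointwise in auto)
  then have "(\<integral>t. (cmod (?T t)) powr q \<partial>lborel) \<le> (\<integral>t. M powr (q - 2) * (cmod (?T t))\<^sup>2 \<partial>lborel)"
    using integrable_osc_transform_square pointwise by (intro integral_mono) auto
  also have "\<dots> = M powr (q - 2) * (\<integral>t. (cmod (?T t))\<^sup>2 \<partial>lborel)" by simp
  also have "\<dots> \<le> M powr (q - 2) * (E * S)"
    using integral_osc_transform_square_le unfolding E_def S_def by (intro mult_left_mono) auto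
  finally have "(\<integral>t. (cmod (?T t)) powr q \<partial>lborel) powr (1/q) \<le> (M powr (q - 2) * (E * S)) powr (1/q)"
    using q by (intro powr_mono2) auto
  also have "\<dots> = (b - a) powr (1/2 - 1/q) * E powr (1/q) * sqrt S"
  proof -
    have "M powr ((q - 2) / q) = (b - a) powr (1/2 - 1/q) * S powr (1/2 - 1/q)"
    proof -
      have "M = (b - a) powr (1/2) * S powr (1/2)" unfolding M_def using S ab by (simp add: powr_half_sqrt)
      moreover have "1/2 * ((q - 2) / q) = 1/2 - 1/q" using q by (simp add: field_simps)
      ultimately show ?thesis by (simp add: powr_mult powr_powr)
    qed
    then have "(M powr (q - 2) * (E * S)) powr (1/q)
        = (b - a) powr (1/2 - 1/q) * E powr (1/q) * (S powr (1/2 - 1/q) * S powr (1/q))"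
      by (simp add: powr_mult powr_powr mult_ac)
    also have "S powr (1/2 - 1/q) * S powr (1/q) = sqrt S"
      using S by (simp add: powr_half_sqrt flip: powr_add)
    finally show ?thesis .
  qed
  finally show "(\<integral>t. (cmod (?T t)) powr q \<partial>lborel) powr (1/q)
       \<le> (b - a) powr (1/2 - 1/q) * (2 * pi / c) powr (1/q) * sqrt (\<integral>s. (cmod (F s))\<^sup>2 \<partial>lborel)"
    unfolding E_def S_def .
qed

end

end

subsection \<open>Dyadic pieces\<close>

lemma dyadic_powr_lower:
  fixes k :: int and r e :: real
  assumes r: "2 powr (real_of_int k - 1) \<le> r" "r \<le> 2 powr (real_of_int k + 1)"
  shows "2 powr (- \<bar>e\<bar>) * 2 powr (real_of_int k * e) \<le> r powr e"
proof -
  have "0 < r" using r(1) by (smt (verit) powr_gt_zero)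
  then have "(real_of_int k - 1) * ln 2 \<le> ln r" "ln r \<le> (real_of_int k + 1) * ln 2"
    using r by (simp_all flip: ln_powr ln_le_cancel_iff)
  then have "\<bar>ln r - real_of_int k * ln 2\<bar> \<le> ln 2" by (simp add: algebra_simps)
  then have "\<bar>e * (ln r - real_of_int k * ln 2)\<bar> \<le> \<bar>e\<bar> * ln 2"
    unfolding abs_mult by (intro mult_left_mono) auto
  then have "- \<bar>e\<bar> * ln 2 + real_of_int k * e * ln 2 \<le> e * ln r" by (simp add: algebra_simps)
  then show ?thesis using \<open>0 < r\<close> by (simp add: powr_def flip: exp_add)
qed

lemma bump_continuous:
  assumes "bump Phi"
  shows "continuous_on UNIV Phi"
proof -
  have "Phi differentiable (at x)" for x
    using assms unfolding bump_def smooth_on_def by (metis funpow_0 UNIV_I)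
  then show ?thesis
    by (intro continuous_at_imp_continuous_on ballI differentiable_imp_continuous_within)
qed

lemma psik_continuous:
  assumes "bump Phi"
  shows "continuous_on UNIV (psik Phi k)"
  unfolding psik_def[abs_def] psi_def
  by (intro continuous_intros continuous_on_compose2[OF bump_continuous[OF assms]]) auto

lemma psik_measurable [measurable]: "bump Phi \<Longrightarrow> psik Phi k \<in> borel_measurable borel"
  by (rule borel_measurable_continuous_onI[OF psik_continuous])

lemma abs_psik_le_1:
  assumes "bump Phi"
  shows "\<bar>psik Phi k s\<bar> \<le> 1"
proof -
  have "0 \<le> Phi x \<and> Phi x \<le> 1" for x using assms unfolding bump_def by blast
  then show ?thesis unfolding psik_def psi_def by (smt (verit))
qed

lemma psik_eq_0:
  assumes "bump Phi" and "s > 0" and "s \<notin> {2 powr (real_of_int k - 1) .. 2 powr (real_of_int k + 1)}"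
  shows "psik Phi k s = 0"
proof -
  define y where "y = 2 powr (- real_of_int k) * s"
  have "y > 0" unfolding y_def using assms(2) by simp
  have "y < 1/2 \<or> y > 2"
  proof -
    have "y < 2 powr (- real_of_int k) * 2 powr (real_of_int k - 1)
        \<or> y > 2 powr (- real_of_int k) * 2 powr (real_of_int k + 1)"
      using assms(3) unfolding y_def by auto
    then show ?thesis by (simp add: powr_minus_divide powr_add powr_diff)
  qed
  moreover have "Phi x = 0" if "\<bar>x\<bar> > 2" for x using assms(1) that unfolding bump_def by blast
  moreover have "Phi x = 1" if "\<bar>x\<bar> \<le> 1" for x using assms(1) that unfolding bump_def by blast
  ultimately show ?thesis
    using \<open>y > 0\<close> unfolding psik_def psi_def y_def[symmetric] by auto
qed

lemma expanding_if_abs_deriv_ge: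
  fixes f f' :: "real \<Rightarrow> real"
  assumes deriv: "\<And>z. a \<le> z \<Longrightarrow> z \<le> b \<Longrightarrow> (f has_real_derivative f' z) (at z)"
    and lower: "\<And>z. a \<le> z \<Longrightarrow> z \<le> b \<Longrightarrow> c \<le> \<bar>f' z\<bar>"
    and "x \<in> {a..b}" "y \<in> {a..b}"
  shows "c * \<bar>x - y\<bar> \<le> \<bar>f x - f y\<bar>"
proof -
  have ordered: "c * \<bar>v - u\<bar> \<le> \<bar>f v - f u\<bar>" if "u < v" "u \<in> {a..b}" "v \<in> {a..b}" for u v
  proof -
    have "(f has_real_derivative f' z) (at z)" if "u \<le> z" "z \<le> v" for z
      using deriv \<open>u \<in> {a..b}\<close> \<open>v \<in> {a..b}\<close> that by auto
    then obtain z where z: "u < z" "z < v" "f v - f u = (v - u) * f' z"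
      using MVT2[OF \<open>u < v\<close>] by blast
    have "c * \<bar>v - u\<bar> \<le> \<bar>f' z\<bar> * \<bar>v - u\<bar>"
      using lower[of z] z that by (intro mult_right_mono) auto
    then show ?thesis using z by (simp add: abs_mult)
  qed
  show ?thesis
    using ordered[of x y] ordered[of y x] assms(3,4)
    by (cases x y rule: linorder_cases) (auto simp: abs_minus_commute)
qed

lemma deriv_lower_on_dyadic_shells:
  assumes "H1 phi m1" and "H2 phi m2"
  obtains c0 where "c0 > 0"
    and "\<And>k r. 2 powr (real_of_int k - 1) \<le> r \<Longrightarrow> r \<le> 2 powr (real_of_int k + 1)
           \<Longrightarrow> c0 * 2 powr (real_of_int k * (mk m1 m2 k - 1)) \<le> \<bar>deriv phi r\<bar>"
proof -
  obtain c1 where c1: "c1 > 0" and l1: "\<And>r. r \<ge> 1 \<Longrightarrow> c1 * r powr (m1 - 1) \<le> \<bar>deriv phi r\<bar>"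
    using assms(1) unfolding H1_def by blast
  obtain c2 where c2: "c2 > 0" and l2: "\<And>r. 0 < r \<Longrightarrow> r < 1 \<Longrightarrow> c2 * r powr (m2 - 1) \<le> \<bar>deriv phi r\<bar>"
    using assms(2) unfolding H2_def by blast
  define c0 where "c0 = min c1 c2 * 2 powr (- (\<bar>m1 - 1\<bar> + \<bar>m2 - 1\<bar> + \<bar>m1 - m2\<bar>))"
  show thesis
  proof (rule that)
    show "c0 > 0" unfolding c0_def using c1 c2 by simp
    fix k r assume r: "2 powr (real_of_int k - 1) \<le> r" "r \<le> 2 powr (real_of_int k + 1)"
    have "0 < r" using r(1) by (smt (verit) powr_gt_zero)
    \<comment> \<open>the hypothesis governing \<open>r\<close> is the one of \<open>m(k)\<close>, except on the shells \<open>k = 0, -1\<close>\<close>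
    obtain c' m' where c': "min c1 c2 \<le> c'" and m': "m' = m1 \<or> m' = m2"
      and exponent: "real_of_int k * (mk m1 m2 k - 1) - \<bar>m1 - m2\<bar> \<le> real_of_int k * (m' - 1)"
      and bound: "c' * r powr (m' - 1) \<le> \<bar>deriv phi r\<bar>"
    proof (cases "r \<ge> 1")
      case True
      then have "2 powr 0 \<le> 2 powr (real_of_int k + 1)" using r(2) by simp
      then have "k \<ge> -1" by (subst (asm) powr_le_cancel_iff) auto
      then have "k \<ge> 0 \<or> k = -1" by linarith
      then have "real_of_int k * (mk m1 m2 k - 1) - \<bar>m1 - m2\<bar> \<le> real_of_int k * (m1 - 1)"
        by (auto simp: mk_def)
      then show thesis using that[of c1 m1] l1 True by auto
    next
      case False
      then have "2 powr (real_of_int k - 1) < 2 powr 0" using r(1) by simp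
      then have "k \<le> 0" by (subst (asm) powr_less_cancel_iff) auto
      then have "real_of_int k * (mk m1 m2 k - 1) - \<bar>m1 - m2\<bar> \<le> real_of_int k * (m2 - 1)"
        by (cases "k = 0") (auto simp: mk_def)
      then show thesis using that[of c2 m2] l2 \<open>0 < r\<close> False by auto
    qed
    have "c0 * 2 powr (real_of_int k * (mk m1 m2 k - 1))
        = min c1 c2 * (2 powr (- (\<bar>m1 - 1\<bar> + \<bar>m2 - 1\<bar>)) * 2 powr (real_of_int k * (mk m1 m2 k - 1) - \<bar>m1 - m2\<bar>))"
      unfolding c0_def by (simp add: mult.assoc flip: powr_add) (simp add: algebra_simps)
    also have "\<dots> \<le> c' * (2 powr (- \<bar>m' - 1\<bar>) * 2 powr (real_of_int k * (m' - 1)))"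
      using c1 c2 c' m' exponent by (intro mult_mono) auto
    also have "\<dots> \<le> c' * r powr (m' - 1)"
      using dyadic_powr_lower[OF r, of "m' - 1"] c' c1 c2 by (intro mult_left_mono) auto
    finally show "c0 * 2 powr (real_of_int k * (mk m1 m2 k - 1)) \<le> \<bar>deriv phi r\<bar>"
      using bound by simp
  qed
qed

lemma smooth_on_has_real_derivative:
  assumes "smooth_on S f" and "x \<in> S"
  shows "(f has_real_derivative deriv f x) (at x)"
proof -
  have "((deriv ^^ 0) f) differentiable (at x)" using assms unfolding smooth_on_def by blast
  then show ?thesis by (simp add: DERIV_deriv_iff_real_differentiable)
qed

lemma smooth_on_continuous_on:
  assumes "smooth_on S f"
  shows "continuous_on S f"
  using smooth_on_has_real_derivative[OF assms]
  by (intro continuous_at_imp_continuous_on ballI) (auto intro: DERIV_isCont)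

text \<open>\<open>\<psi>\<^sub>k f\<close> extended by zero to \<open>s \<le> 0\<close>, where \<open>f\<close> carries no information.\<close>
definition dyadic_piece :: "(real \<Rightarrow> real) \<Rightarrow> int \<Rightarrow> (real \<Rightarrow> complex) \<Rightarrow> real \<Rightarrow> complex" where
  "dyadic_piece Phi k f s = (if 0 < s then complex_of_real (psik Phi k s) * f s else 0)"

lemma osc_eq_osc_transform:
  "osc Phi phi k f t = osc_transform (dyadic_piece Phi k f) (\<lambda>s. if 0 < s then phi s else 0) t"
  unfolding osc_def osc_transform_def set_lebesgue_integral_def dyadic_piece_def
  by (rule Bochner_Integration.integral_cong[OF refl]) (auto simp: indicator_def)

lemma L2norm_k_eq: "L2norm_k Phi k f = sqrt (\<integral>s. (cmod (dyadic_piece Phi k f s))\<^sup>2 \<partial>lborel)"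
  unfolding L2norm_k_def set_lebesgue_integral_def dyadic_piece_def
  by (rule arg_cong[where f=sqrt], rule Bochner_Integration.integral_cong[OF refl])
    (auto simp: indicator_def)

lemma dyadic_piece_eq_0:
  "bump Phi \<Longrightarrow> s \<notin> {2 powr (real_of_int k - 1) .. 2 powr (real_of_int k + 1)} \<Longrightarrow> dyadic_piece Phi k f s = 0"
  unfolding dyadic_piece_def using psik_eq_0 by auto

lemma
  assumes bump: "bump Phi" and f: "L2pos f"
  shows dyadic_piece_measurable: "dyadic_piece Phi k f \<in> borel_measurable borel"
    and dyadic_piece_square_integrable: "integrable lborel (\<lambda>s. (cmod (dyadic_piece Phi k f s))\<^sup>2)"
proof -
  have f_meas: "(\<lambda>s. indicator {0<..} s *\<^sub>R f s) \<in> borel_measurable borel"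
    using f unfolding L2pos_def set_borel_measurable_def by simp
  have [measurable]: "psik Phi k \<in> borel_measurable borel" by (rule psik_measurable[OF bump])
  have eq: "dyadic_piece Phi k f = (\<lambda>s. complex_of_real (psik Phi k s) * (indicator {0<..} s *\<^sub>R f s))"
    unfolding dyadic_piece_def by (auto simp: indicator_def)
  show meas: "dyadic_piece Phi k f \<in> borel_measurable borel"
    unfolding eq using f_meas by measurable
  have le: "(cmod (dyadic_piece Phi k f s))\<^sup>2 \<le> indicator {0<..} s * (cmod (f s))\<^sup>2" for s
  proof (cases "0 < s")
    case True
    have "(psik Phi k s)\<^sup>2 \<le> 1" using abs_psik_le_1[OF bump] by (simp add: abs_square_le_1)
    have "(cmod (dyadic_piece Phi k f s))\<^sup>2 = (psik Phi k s)\<^sup>2 * (cmod (f s))\<^sup>2"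
      using True by (simp add: dyadic_piece_def norm_mult power_mult_distrib)
    also have "\<dots> \<le> (cmod (f s))\<^sup>2"
      by (rule mult_left_le_one_le) (simp_all add: \<open>(psik Phi k s)\<^sup>2 \<le> 1\<close>)
    finally show ?thesis using True by simp
  qed (simp add: dyadic_piece_def)
  show "integrable lborel (\<lambda>s. (cmod (dyadic_piece Phi k f s))\<^sup>2)"
  proof (rule Bochner_Integration.integrable_bound)
    show "integrable lborel (\<lambda>s. indicator {0<..} s *\<^sub>R (cmod (f s))\<^sup>2)"
      using f unfolding L2pos_def set_integrable_def by blast
    show "(\<lambda>s. (cmod (dyadic_piece Phi k f s))\<^sup>2) \<in> borel_measurable lborel"
      using meas by measurable
    show "AE s in lborel. norm ((cmod (dyadic_piece Phi k f s))\<^sup>2) \<le> norm (indicator {0<..} s *\<^sub>R (cmod (f s))\<^sup>2)"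
      using le by (intro AE_I2) (simp add: abs_mult)
  qed
qed

lemma dyadic_width: "2 powr (real_of_int k + 1) - 2 powr (real_of_int k - 1) = 3/2 * 2 powr real_of_int k"
  by (simp add: powr_add powr_diff)

lemma dyadic_Lq_constant:
  assumes "c0 > 0" and "q \<noteq> 0"
  shows "(3/2 * 2 powr real_of_int k) powr (1/2 - 1/q) * (2 * pi / (c0 * 2 powr (real_of_int k * (m - 1)))) powr (1/q)
    = (3/2) powr (1/2 - 1/q) * (2 * pi / c0) powr (1/q) * 2 powr ((1/2 - m/q) * real_of_int k)"
proof -
  have width: "(3/2 * 2 powr real_of_int k) powr (1/2 - 1/q)
      = (3/2) powr (1/2 - 1/q) * 2 powr (real_of_int k * (1/2 - 1/q))"
    by (subst powr_mult) (auto simp: powr_powr)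
  have "2 * pi / (c0 * 2 powr (real_of_int k * (m - 1))) = (2 * pi / c0) * 2 powr (- (real_of_int k * (m - 1)))"
    by (simp add: powr_minus divide_inverse)
  then have speed: "(2 * pi / (c0 * 2 powr (real_of_int k * (m - 1)))) powr (1/q)
      = (2 * pi / c0) powr (1/q) * 2 powr (- (real_of_int k * (m - 1)) / q)"
    using assms(1) by (simp only:) (subst powr_mult, auto simp: powr_powr)
  have "real_of_int k * (1/2 - 1/q) + - (real_of_int k * (m - 1)) / q = (1/2 - m/q) * real_of_int k"
    using assms(2) by (simp add: field_simps)
  then have exponent: "2 powr (real_of_int k * (1/2 - 1/q)) * 2 powr (- (real_of_int k * (m - 1)) / q)
      = 2 powr ((1/2 - m/q) * real_of_int k)"
    by (simp only: powr_add[symmetric])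
  show ?thesis
    unfolding width speed exponent[symmetric] by (simp only: mult_ac)
qed

lemma expanding_phase_on_dyadic_shell:
  fixes k :: int
  assumes smooth: "smooth_on {0<..} phi"
    and lower: "\<And>r. 2 powr (real_of_int k - 1) \<le> r \<Longrightarrow> r \<le> 2 powr (real_of_int k + 1) \<Longrightarrow> c \<le> \<bar>deriv phi r\<bar>"
    and s: "s \<in> {2 powr (real_of_int k - 1) .. 2 powr (real_of_int k + 1)}"
    and s': "s' \<in> {2 powr (real_of_int k - 1) .. 2 powr (real_of_int k + 1)}"
  shows "c * \<bar>s - s'\<bar> \<le> \<bar>(if 0 < s then phi s else 0) - (if 0 < s' then phi s' else 0)\<bar>"
proof -
  have pos: "0 < z" if "2 powr (real_of_int k - 1) \<le> z" for z
    using that by (smt (verit) powr_gt_zero)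
  have "c * \<bar>s - s'\<bar> \<le> \<bar>phi s - phi s'\<bar>"
    by (rule expanding_if_abs_deriv_ge[where f' = "deriv phi", OF _ lower s s'])
      (use smooth_on_has_real_derivative[OF smooth] pos in auto)
  then show ?thesis using pos s s' by simp
qed

lemma
  fixes k :: int and q :: real
  assumes bump: "bump Phi" and smooth: "smooth_on {0<..} phi" and c0: "c0 > 0"
    and lower: "\<And>r. 2 powr (real_of_int k - 1) \<le> r \<Longrightarrow> r \<le> 2 powr (real_of_int k + 1)
        \<Longrightarrow> c0 * 2 powr (real_of_int k * (m - 1)) \<le> \<bar>deriv phi r\<bar>"
    and f: "L2pos f" and q: "2 \<le> q"
  shows integrable_osc_powr: "integrable lborel (\<lambda>t. (cmod (osc Phi phi k f t)) powr q)"
    and osc_Lq_le: "(LINT t|lborel. (cmod (osc Phi phi k f t)) powr q) powr (1 / q)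
      \<le> (3/2) powr (1/2 - 1/q) * (2 * pi / c0) powr (1/q) * 2 powr ((1/2 - m / q) * real_of_int k)
         * L2norm_k Phi k f"
proof -
  have "(\<lambda>s. if s \<in> {0<..} then phi s else 0) \<in> borel_measurable borel"
    using smooth_on_continuous_on[OF smooth]
    by (intro borel_measurable_continuous_on_if) (auto intro: continuous_on_const)
  then have phase: "(\<lambda>s. if 0 < s then phi s else 0) \<in> borel_measurable borel" by simp
  have c: "0 < c0 * 2 powr (real_of_int k * (m - 1))" using c0 by simp
  have ab: "2 powr (real_of_int k - 1) < 2 powr (real_of_int k + 1)" by simp
  have q0: "q \<noteq> 0" using q by simp
  have expanding: "c0 * 2 powr (real_of_int k * (m - 1)) * \<bar>s - s'\<bar>
      \<le> \<bar>(if 0 < s then phi s else 0) - (if 0 < s' then phi s' else 0)\<bar>"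
    if "s \<in> {2 powr (real_of_int k - 1) .. 2 powr (real_of_int k + 1)}"
      "s' \<in> {2 powr (real_of_int k - 1) .. 2 powr (real_of_int k + 1)}" for s s'
    by (rule expanding_phase_on_dyadic_shell[OF smooth lower that])
  note Lq = integrable_osc_transform_powr osc_transform_Lq_le
  note Lq = Lq[OF dyadic_piece_measurable[OF bump f] _ dyadic_piece_square_integrable[OF bump f]
      phase c _ ab q]
  show "integrable lborel (\<lambda>t. (cmod (osc Phi phi k f t)) powr q)"
    unfolding osc_eq_osc_transform
    by (rule Lq(1)) (use dyadic_piece_eq_0[OF bump] expanding in blast)+
  have "(\<integral>t. (cmod (osc Phi phi k f t)) powr q \<partial>lborel) powr (1/q)
       \<le> (3/2 * 2 powr real_of_int k) powr (1/2 - 1/q) * (2 * pi / (c0 * 2 powr (real_of_int k * (m - 1)))) powr (1/q)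
         * L2norm_k Phi k f"
    unfolding osc_eq_osc_transform L2norm_k_eq dyadic_width[symmetric]
    by (rule Lq(2)) (use dyadic_piece_eq_0[OF bump] expanding in blast)+
  then show "(LINT t|lborel. (cmod (osc Phi phi k f t)) powr q) powr (1 / q)
      \<le> (3/2) powr (1/2 - 1/q) * (2 * pi / c0) powr (1/q) * 2 powr ((1/2 - m / q) * real_of_int k)
         * L2norm_k Phi k f"
    unfolding dyadic_Lq_constant[OF c0 q0] .
qed

lemma osc_sup_le:
  fixes k :: int
  assumes bump: "bump Phi" and f: "L2pos f"
  shows "cmod (osc Phi phi k f t) \<le> sqrt (3/2) * 2 powr ((1/2) * real_of_int k) * L2norm_k Phi k f"
proof -
  have ab: "2 powr (real_of_int k - 1) < 2 powr (real_of_int k + 1)" by simp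
  have "cmod (osc Phi phi k f t) \<le> (\<integral>s. cmod (dyadic_piece Phi k f s) \<partial>lborel)"
    unfolding osc_eq_osc_transform by (rule norm_osc_transform_le)
  also have "\<dots> \<le> sqrt (2 powr (real_of_int k + 1) - 2 powr (real_of_int k - 1)) * L2norm_k Phi k f"
    unfolding L2norm_k_eq
    by (rule integral_norm_F_le[OF dyadic_piece_measurable[OF bump f] dyadic_piece_eq_0[OF bump]
        dyadic_piece_square_integrable[OF bump f] ab])
  also have "sqrt (2 powr (real_of_int k + 1) - 2 powr (real_of_int k - 1)) = sqrt (3/2) * 2 powr ((1/2) * real_of_int k)"
  proof -
    have "sqrt (2 powr real_of_int k) = (2 powr real_of_int k) powr (1/2)" by (simp add: powr_half_sqrt)
    then show ?thesis unfolding dyadic_width real_sqrt_mult by (simp add: powr_powr mult.commute)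
  qed
  finally show ?thesis .
qed

theorem lemma2:
  fixes Phi phi :: "real \<Rightarrow> real" and m1 m2 :: real
  assumes "bump Phi"
    and "smooth_on {0<..} phi"
    and "H1 phi m1" and "H2 phi m2"
  shows "(\<forall>q::real. 2 \<le> q \<longrightarrow> (\<exists>C. \<forall>(k::int) (f::real \<Rightarrow> complex). L2pos f \<longrightarrow>
            integrable lborel (\<lambda>t. (cmod (osc Phi phi k f t)) powr q)
          \<and> (LINT t|lborel. (cmod (osc Phi phi k f t)) powr q) powr (1 / q)
              \<le> C * 2 powr ((1/2 - mk m1 m2 k / q) * real_of_int k) * L2norm_k Phi k f))
       \<and> (\<exists>C. \<forall>(k::int) (f::real \<Rightarrow> complex). L2pos f \<longrightarrow>
            (AE t in lborel. cmod (osc Phi phi k f t)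
               \<le> C * 2 powr ((1/2) * real_of_int k) * L2norm_k Phi k f))"
proof (intro conjI allI impI)
  obtain c0 where c0: "c0 > 0" and lower: "\<And>k r. 2 powr (real_of_int k - 1) \<le> r \<Longrightarrow> r \<le> 2 powr (real_of_int k + 1)
       \<Longrightarrow> c0 * 2 powr (real_of_int k * (mk m1 m2 k - 1)) \<le> \<bar>deriv phi r\<bar>"
    using deriv_lower_on_dyadic_shells[OF assms(3,4)] by blast
  fix q :: real assume q: "2 \<le> q"
  show "\<exists>C. \<forall>(k::int) (f::real \<Rightarrow> complex). L2pos f \<longrightarrow>
            integrable lborel (\<lambda>t. (cmod (osc Phi phi k f t)) powr q)
          \<and> (LINT t|lborel. (cmod (osc Phi phi k f t)) powr q) powr (1 / q)
              \<le> C * 2 powr ((1/2 - mk m1 m2 k / q) * real_of_int k) * L2norm_k Phi k f"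
  proof (intro exI[of _ "(3/2) powr (1/2 - 1/q) * (2 * pi / c0) powr (1/q)"] allI impI conjI)
    fix k and f :: "real \<Rightarrow> complex" assume "L2pos f"
    from integrable_osc_powr[OF assms(1,2) c0 lower this q]
    show "integrable lborel (\<lambda>t. (cmod (osc Phi phi k f t)) powr q)" .
    from osc_Lq_le[OF assms(1,2) c0 lower \<open>L2pos f\<close> q]
    show "(LINT t|lborel. (cmod (osc Phi phi k f t)) powr q) powr (1 / q)
      \<le> (3/2) powr (1/2 - 1/q) * (2 * pi / c0) powr (1/q) * 2 powr ((1/2 - mk m1 m2 k / q) * real_of_int k)
        * L2norm_k Phi k f" .
  qed
next
  show "\<exists>C. \<forall>(k::int) (f::real \<Rightarrow> complex). L2pos f \<longrightarrow>
            (AE t in lborel. cmod (osc Phi phi k f t) \<le> C * 2 powr ((1/2) * real_of_int k) * L2norm_k Phi k f)"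
    using osc_sup_le[OF assms(1)] by (intro exI[of _ "sqrt (3/2)"] allI impI AE_I2)
qed

end
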